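(* For every monomial $\mathbf{y}^\alpha\in\mathbb{K}[\mathbf{y}]$, $\deg_{y_0}(\eta(\mathbf{y}^\alpha))=\deg(\mathbf{y}^\alpha)-\delta(\psi(\mathbf{y}^\alpha))$, where $\deg$ is the total degree and $\deg_{y_0}$ the degree in $y_0$.
   Context: Let $\mathbb{K}$ be a field of characteristic $0$, $M\subset\mathbb{R}^n$ a polytope with $0\in M$, $S_M\subset\mathbb{Z}^n$ the affine semigroup generated by $M\cap\mathbb{Z}^n$ and $S_M^h\subset\mathbb{Z}^{n+1}$ the one generated by $\{(s,1):s\in M\cap\mathbb{Z}^n\}$, both assumed pointed. $\mathbb{K}[S]$ is the semigroup algebra with monomials $X^s$, $X^sX^t=X^{s+t}$; $\mathbb{K}[S_M^h]$ is graded by $\deg X^{(s,d)}=d$. $\chi:\mathbb{K}[S_M^h]\to\mathbb{K}[S_M]$, $X^{(s,d)}\mapsto X^s$. The affine degree $\delta^A(X^s)$ is the least $d$ with $(s,d)\in S_M^h$; the sparse degree of a monomial $X^{(s,d)}$ is $\delta(X^{(s,d)})=\delta^A(X^s)$. Fix a monomial order $<_M$ on $\mathbb{K}[S_M]$. Let $a_0,\dots,a_m$ be the elements of $\{(s,1):s\in M\cap\mathbb{Z}^n\}$ with $a_0=(0,1)$; $\mathbb{K}[\mathbf{y}]=\mathbb{K}[y_0,\dots,y_m]$; $\psi:\mathbb{K}[\mathbf{y}]\to\mathbb{K}[S_M^h]$ the $\mathbb{K}$-algebra epimorphism $y_i\mapsto X^{a_i}$, with kernel the lattice ideal $T$. Fix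 a monomial order $\tilde<$ on $\mathbb{K}[\mathbf{y}]$ and define the monomial order $<_y$: $\mathbf{y}^a<_y\mathbf{y}^b$ iff $\deg\mathbf{y}^a<\deg\mathbf{y}^b$; or total degrees equal and $\deg_{y_0}\mathbf{y}^a>\deg_{y_0}\mathbf{y}^b$; or both equal and $\chi(\psi(\mathbf{y}^a))<_M\chi(\psi(\mathbf{y}^b))$; or all equal and $\mathbf{y}^a\,\tilde<\,\mathbf{y}^b$. For $g\in\mathbb{K}[\mathbf{y}]$, $\eta(g)$ denotes the normal form of $g$ with respect to $T$ and $<_y$ (for a monomial this normal form is a monomial). *)

theory Defs
  imports "HOL-Analysis.Analysis" "HOL-Library.Poly_Mapping"
begin

definition polytope :: "(real ^ 'n) set \<Rightarrow> bool" where
  "polytope M \<longleftrightarrow> (\<exists>P. finite P \<and> M = convex hull P)"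

definition latpts :: "(real ^ 'n) set \<Rightarrow> (int ^ 'n) set" where
  "latpts M = {s. (\<chi> i. real_of_int (s $ i)) \<in> M}"

inductive_set sgrp :: "'a::monoid_add set \<Rightarrow> 'a set" for G where
  zero: "0 \<in> sgrp G"
| add: "x \<in> sgrp G \<Longrightarrow> g \<in> G \<Longrightarrow> x + g \<in> sgrp G"

definition pointed :: "'a::ab_group_add set \<Rightarrow> bool" where
  "pointed S \<longleftrightarrow> (\<forall>s\<in>S. - s \<in> S \<longrightarrow> s = 0)"

definition S_M :: "(real ^ 'n) set \<Rightarrow> (int ^ 'n) set" where
  "S_M M = sgrp (latpts M)"

(* S_M^h \<subseteq> Z^{n+1} = Z^n \<times> Z, last coordinate = degree *)
definition S_Mh :: "(real ^ 'n) set \<Rightarrow> ((int ^ 'n) \<times> int) set" where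
  "S_Mh M = sgrp ((\<lambda>s. (s, 1)) ` latpts M)"

definition deltaA :: "(real ^ 'n) set \<Rightarrow> int ^ 'n \<Rightarrow> nat" where
  "deltaA M s = (LEAST d::nat. (s, int d) \<in> S_Mh M)"

definition monomial_order_on :: "'a::monoid_add set \<Rightarrow> ('a \<Rightarrow> 'a \<Rightarrow> bool) \<Rightarrow> bool" where
  "monomial_order_on S lt \<longleftrightarrow>
     (\<forall>x\<in>S. \<not> lt x x) \<and>
     (\<forall>x\<in>S. \<forall>y\<in>S. \<forall>z\<in>S. lt x y \<longrightarrow> lt y z \<longrightarrow> lt x z) \<and>
     (\<forall>x\<in>S. \<forall>y\<in>S. lt x y \<or> x = y \<or> lt y x) \<and>
     (\<forall>x\<in>S. \<forall>y\<in>S. \<forall>z\<in>S. lt x y \<longrightarrow> lt (x + z) (y + z)) \<and>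
     wf {(x, y). x \<in> S \<and> y \<in> S \<and> lt x y}"

(* Polynomial ring K[y_0,...,y_m]: exponent vectors nat \<Rightarrow>\<^sub>0 nat *)
definition ymons :: "nat \<Rightarrow> (nat \<Rightarrow>\<^sub>0 nat) set" where
  "ymons m = {\<alpha>. Poly_Mapping.keys \<alpha> \<subseteq> {..m}}"

definition Ry :: "nat \<Rightarrow> ((nat \<Rightarrow>\<^sub>0 nat) \<Rightarrow>\<^sub>0 'k::field) set" where
  "Ry m = {f. Poly_Mapping.keys f \<subseteq> ymons m}"

definition tdeg :: "(nat \<Rightarrow>\<^sub>0 nat) \<Rightarrow> nat" where
  "tdeg \<alpha> = (\<Sum>i\<in>Poly_Mapping.keys \<alpha>. Poly_Mapping.lookup \<alpha> i)"

definition deg_y0 :: "((nat \<Rightarrow>\<^sub>0 nat) \<Rightarrow>\<^sub>0 'k::zero) \<Rightarrow> nat" where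
  "deg_y0 f = Max (insert 0 ((\<lambda>\<beta>. Poly_Mapping.lookup \<beta> 0) ` Poly_Mapping.keys f))"

definition psi_exp :: "(nat \<Rightarrow> int ^ 'n) \<Rightarrow> (nat \<Rightarrow>\<^sub>0 nat) \<Rightarrow> (int ^ 'n) \<times> int" where
  "psi_exp a \<alpha> = ((\<Sum>i\<in>Poly_Mapping.keys \<alpha>. of_nat (Poly_Mapping.lookup \<alpha> i) *s a i), int (tdeg \<alpha>))"

definition chipsi :: "(nat \<Rightarrow> int ^ 'n) \<Rightarrow> (nat \<Rightarrow>\<^sub>0 nat) \<Rightarrow> int ^ 'n" where
  "chipsi a \<alpha> = fst (psi_exp a \<alpha>)"

(* psi : K[y] \<rightarrow> K[S_M^h], K-linear extension of y^alpha \<mapsto> X^(psi_exp alpha);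
   elements of K[S_M^h] represented as coefficient functions *)
definition psi :: "(nat \<Rightarrow> int ^ 'n) \<Rightarrow> ((nat \<Rightarrow>\<^sub>0 nat) \<Rightarrow>\<^sub>0 'k::field) \<Rightarrow> ((int ^ 'n) \<times> int \<Rightarrow> 'k)" where
  "psi a f = (\<lambda>u. \<Sum>\<alpha>\<in>{\<alpha>\<in>Poly_Mapping.keys f. psi_exp a \<alpha> = u}. Poly_Mapping.lookup f \<alpha>)"

definition Tker :: "nat \<Rightarrow> (nat \<Rightarrow> int ^ 'n) \<Rightarrow> ((nat \<Rightarrow>\<^sub>0 nat) \<Rightarrow>\<^sub>0 'k::field) set" where
  "Tker m a = {f \<in> Ry m. psi a f = (\<lambda>_. 0)}"

definition ordy :: "(int ^ 'n \<Rightarrow> int ^ 'n \<Rightarrow> bool) \<Rightarrow> ((nat \<Rightarrow>\<^sub>0 nat) \<Rightarrow> (nat \<Rightarrow>\<^sub>0 nat) \<Rightarrow> bool)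
   \<Rightarrow> (nat \<Rightarrow> int ^ 'n) \<Rightarrow> (nat \<Rightarrow>\<^sub>0 nat) \<Rightarrow> (nat \<Rightarrow>\<^sub>0 nat) \<Rightarrow> bool" where
  "ordy ltM ltt a \<alpha> \<beta> \<longleftrightarrow>
     tdeg \<alpha> < tdeg \<beta> \<or>
     (tdeg \<alpha> = tdeg \<beta> \<and>
       (Poly_Mapping.lookup \<alpha> 0 > Poly_Mapping.lookup \<beta> 0 \<or>
        (Poly_Mapping.lookup \<alpha> 0 = Poly_Mapping.lookup \<beta> 0 \<and>
          (ltM (chipsi a \<alpha>) (chipsi a \<beta>) \<or>
           (chipsi a \<alpha> = chipsi a \<beta> \<and> ltt \<alpha> \<beta>)))))"

definition lead_mon :: "((nat \<Rightarrow>\<^sub>0 nat) \<Rightarrow> (nat \<Rightarrow>\<^sub>0 nat) \<Rightarrow> bool) \<Rightarrow> ((nat \<Rightarrow>\<^sub>0 nat) \<Rightarrow>\<^sub>0 'k::zero) \<Rightarrow> nat \<Rightarrow>\<^sub>0 nat" where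
  "lead_mon lt f = (THE \<beta>. \<beta> \<in> Poly_Mapping.keys f \<and> (\<forall>\<gamma>\<in>Poly_Mapping.keys f. \<gamma> = \<beta> \<or> lt \<gamma> \<beta>))"

definition normal_form :: "((nat \<Rightarrow>\<^sub>0 nat) \<Rightarrow>\<^sub>0 'k::field) set \<Rightarrow> ((nat \<Rightarrow>\<^sub>0 nat) \<Rightarrow>\<^sub>0 'k) set
    \<Rightarrow> ((nat \<Rightarrow>\<^sub>0 nat) \<Rightarrow> (nat \<Rightarrow>\<^sub>0 nat) \<Rightarrow> bool) \<Rightarrow> ((nat \<Rightarrow>\<^sub>0 nat) \<Rightarrow>\<^sub>0 'k) \<Rightarrow> ((nat \<Rightarrow>\<^sub>0 nat) \<Rightarrow>\<^sub>0 'k)" where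
  "normal_form R I lt g = (THE r. r \<in> R \<and> g - r \<in> I \<and>
      (\<forall>\<beta>\<in>Poly_Mapping.keys r. \<beta> \<notin> {lead_mon lt f | f. f \<in> I \<and> f \<noteq> 0}))"

end

theory Submission
  imports Defs
begin

text \<open>The normal form of y^alpha modulo the lattice ideal T is the <_y-least monomial y^beta
  of the psi-fibre of y^alpha. Indeed y^alpha - y^beta lies in T, and y^beta is the leading
  monomial of no nonzero f in T: the coefficient of psi(y^beta) in psi(f) = 0 is the sum of the
  coefficients of f over the fibre, so f contains a second monomial of the fibre, which is
  <_y-larger than y^beta.

  On the fibre over X^(s,d) the total degree and chi psi are constant, so y^beta has the largest
  y_0-exponent in the fibre. As a_0 = 0, removing the y_0-part y_0^e of a monomial of the fibre
  leaves a preimage of X^(s,d-e), so e <= d - delta(s); multiplying a preimage of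
  X^(s,delta(s)) by y_0^(d-delta(s)) attains this bound.\<close>

lemma sgrp_add:
  assumes "x \<in> sgrp G" and "y \<in> sgrp G"
  shows "x + y \<in> sgrp G"
  using assms(2)
proof (induction y rule: sgrp.induct)
  case (add y g)
  then show ?case by (metis add.assoc sgrp.add)
qed (simp add: assms(1))

lemma sgrp_image_hom:
  assumes "x \<in> sgrp G" and "f 0 = 0" and "\<And>x y. f (x + y) = f x + f y"
  shows "f x \<in> sgrp (f ` G)"
  using assms(1)
proof (induction x rule: sgrp.induct)
  case zero
  then show ?case by (simp add: assms(2) sgrp.zero)
next
  case (add x g)
  then show ?case by (simp add: assms(3) sgrp.add)
qed

lemma fst_S_Mh:
  assumes "p \<in> S_Mh M"
  shows "fst p \<in> S_M M"
proof -
  have "fst p \<in> sgrp (fst ` (\<lambda>s. (s, 1::int)) ` latpts M)"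
    using assms unfolding S_Mh_def by (rule sgrp_image_hom) auto
  then show ?thesis unfolding S_M_def by (simp add: image_image)
qed

lemma poly_mapping_single_induct [case_names zero add_single]:
  fixes \<gamma> :: "'a \<Rightarrow>\<^sub>0 'b::monoid_add"
  assumes "P 0"
    and "\<And>\<gamma> i k. i \<notin> Poly_Mapping.keys \<gamma> \<Longrightarrow> k \<noteq> 0 \<Longrightarrow> P \<gamma> \<Longrightarrow> P (\<gamma> + Poly_Mapping.single i k)"
  shows "P \<gamma>"
proof (induction \<gamma> rule: update_induct)
  case (update \<gamma> i k)
  have "Poly_Mapping.update i k \<gamma> = \<gamma> + Poly_Mapping.single i k"
    using update(1) by (intro poly_mapping_eqI)
      (auto simp: lookup_update lookup_add lookup_single when_def in_keys_iff)
  then show ?case using assms(2) update by simp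
qed (rule assms(1))

lemma tdeg_add: "tdeg (\<gamma> + \<delta>) = tdeg \<gamma> + tdeg \<delta>"
  unfolding tdeg_def by (rule setsum_keys_plus_distrib) auto

lemma psi_exp_add: "psi_exp a (\<gamma> + \<delta>) = psi_exp a \<gamma> + psi_exp a \<delta>"
  unfolding psi_exp_def tdeg_add
  by (simp add: setsum_keys_plus_distrib[where f = "\<lambda>i k. int k *s a i"] vector_sadd_rdistrib)

lemma psi_exp_zero [simp]: "psi_exp a 0 = 0"
  by (simp add: psi_exp_def tdeg_def zero_prod_def)

lemma psi_exp_single: "psi_exp a (Poly_Mapping.single i k) = (of_nat k *s a i, int k)"
  unfolding psi_exp_def tdeg_def by auto

lemma lookup_le_tdeg: "Poly_Mapping.lookup \<gamma> i \<le> tdeg \<gamma>"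
  unfolding tdeg_def by (cases "i \<in> Poly_Mapping.keys \<gamma>") (auto simp: member_le_sum in_keys_iff)

lemma psi_exp_single_mem_S_Mh:
  assumes "a i \<in> latpts M"
  shows "psi_exp a (Poly_Mapping.single i k) \<in> S_Mh M"
proof (induction k)
  case 0
  then show ?case by (simp add: S_Mh_def sgrp.zero)
next
  case (Suc k)
  have "psi_exp a (Poly_Mapping.single i (Suc k)) = psi_exp a (Poly_Mapping.single i k) + (a i, 1)"
    by (simp add: psi_exp_single vector_sadd_rdistrib)
  then show ?case using Suc assms unfolding S_Mh_def by (auto intro: sgrp.add)
qed

lemma psi_exp_mem_S_Mh:
  assumes "a ` Poly_Mapping.keys \<gamma> \<subseteq> latpts M"
  shows "psi_exp a \<gamma> \<in> S_Mh M"
  using assms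
proof (induction \<gamma> rule: poly_mapping_single_induct)
  case zero
  then show ?case by (simp add: S_Mh_def sgrp.zero)
next
  case (add_single \<gamma> i k)
  have "Poly_Mapping.keys (\<gamma> + Poly_Mapping.single i k) = insert i (Poly_Mapping.keys \<gamma>)"
    using add_single(1,2) by (auto simp: in_keys_iff lookup_add lookup_single when_def split: if_splits)
  then have "psi_exp a \<gamma> \<in> S_Mh M" and "psi_exp a (Poly_Mapping.single i k) \<in> S_Mh M"
    using add_single by (auto intro: psi_exp_single_mem_S_Mh)
  then show ?case unfolding psi_exp_add S_Mh_def by (rule sgrp_add)
qed

lemma ymons_add: "\<gamma> \<in> ymons m \<Longrightarrow> \<delta> \<in> ymons m \<Longrightarrow> \<gamma> + \<delta> \<in> ymons m"
  using keys_add[of \<gamma> \<delta>] unfolding ymons_def by auto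

lemma ymons_single: "i \<le> m \<Longrightarrow> Poly_Mapping.single i k \<in> ymons m"
  unfolding ymons_def by auto

lemma ymons_diff:
  assumes "\<gamma> \<in> ymons m"
  shows "\<gamma> - \<delta> \<in> ymons m"
proof -
  have "Poly_Mapping.keys (\<gamma> - \<delta>) \<subseteq> Poly_Mapping.keys \<gamma>"
    by (auto simp: in_keys_iff lookup_minus)
  then show ?thesis using assms unfolding ymons_def by blast
qed

lemma psi_exp_image_ymons:
  assumes "a ` {..m} = latpts M"
  shows "psi_exp a ` ymons m = S_Mh M"
proof
  show "psi_exp a ` ymons m \<subseteq> S_Mh M"
  proof (rule image_subsetI)
    fix \<gamma> assume "\<gamma> \<in> ymons m"
    then have "a ` Poly_Mapping.keys \<gamma> \<subseteq> latpts M"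
      using assms unfolding ymons_def by blast
    then show "psi_exp a \<gamma> \<in> S_Mh M" by (rule psi_exp_mem_S_Mh)
  qed
next
  show "S_Mh M \<subseteq> psi_exp a ` ymons m"
  proof
    fix p assume "p \<in> S_Mh M"
    then show "p \<in> psi_exp a ` ymons m"
      unfolding S_Mh_def
    proof (induction p rule: sgrp.induct)
      case zero
      have "0 \<in> ymons m" by (simp add: ymons_def)
      then show ?case by (metis psi_exp_zero image_eqI)
    next
      case (add p g)
      then obtain \<gamma> where "\<gamma> \<in> ymons m" "p = psi_exp a \<gamma>" by blast
      moreover obtain i where "i \<le> m" "g = (a i, 1)"
        using add.hyps(2) assms by auto
      ultimately have "p + g = psi_exp a (\<gamma> + Poly_Mapping.single i 1)"
        and "\<gamma> + Poly_Mapping.single i 1 \<in> ymons m"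
        by (simp_all add: psi_exp_add psi_exp_single ymons_add ymons_single)
      then show ?case by blast
    qed
  qed
qed

lemma chipsi_image_ymons_subset_S_M:
  assumes "a ` {..m} = latpts M"
  shows "chipsi a ` ymons m \<subseteq> S_M M"
  unfolding chipsi_def using psi_exp_image_ymons[OF assms] by (auto intro: fst_S_Mh)

lemma deltaA_le: "(s, int d) \<in> S_Mh M \<Longrightarrow> deltaA M s \<le> d"
  unfolding deltaA_def by (rule Least_le)

lemma deltaA_mem_S_Mh: "(s, int d) \<in> S_Mh M \<Longrightarrow> (s, int (deltaA M s)) \<in> S_Mh M"
  unfolding deltaA_def by (rule LeastI)

lemma psi_exp_split_y0:
  assumes "a 0 = 0"
  shows "psi_exp a \<gamma> = psi_exp a (\<gamma> - Poly_Mapping.single 0 (Poly_Mapping.lookup \<gamma> 0))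
                        + (0, int (Poly_Mapping.lookup \<gamma> 0))"
proof -
  have "\<gamma> = (\<gamma> - Poly_Mapping.single 0 (Poly_Mapping.lookup \<gamma> 0)) + Poly_Mapping.single 0 (Poly_Mapping.lookup \<gamma> 0)"
    by (rule poly_mapping_eqI) (simp add: lookup_add lookup_minus lookup_single when_def)
  then show ?thesis
    by (metis assms psi_exp_add psi_exp_single vector_smult_rzero)
qed

lemma lookup0_add_deltaA_le_tdeg:
  assumes "a ` {..m} = latpts M" and "a 0 = 0" and "\<gamma> \<in> ymons m"
  shows "Poly_Mapping.lookup \<gamma> 0 + deltaA M (fst (psi_exp a \<gamma>)) \<le> tdeg \<gamma>"
proof -
  let ?\<gamma>' = "\<gamma> - Poly_Mapping.single 0 (Poly_Mapping.lookup \<gamma> 0)"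
  have "psi_exp a ?\<gamma>' \<in> S_Mh M"
    using assms(1,3) ymons_diff psi_exp_image_ymons by blast
  moreover have "psi_exp a ?\<gamma>' = (fst (psi_exp a \<gamma>), int (tdeg \<gamma> - Poly_Mapping.lookup \<gamma> 0))"
    using psi_exp_split_y0[of a \<gamma>] assms(2) lookup_le_tdeg[of \<gamma> 0]
    by (auto simp: psi_exp_def prod_eq_iff of_nat_diff)
  ultimately have "deltaA M (fst (psi_exp a \<gamma>)) \<le> tdeg \<gamma> - Poly_Mapping.lookup \<gamma> 0"
    by (metis deltaA_le)
  then show ?thesis using lookup_le_tdeg[of \<gamma> 0] by linarith
qed

definition psi_fibre :: "nat \<Rightarrow> (nat \<Rightarrow> int ^ 'n) \<Rightarrow> (nat \<Rightarrow>\<^sub>0 nat) \<Rightarrow> (nat \<Rightarrow>\<^sub>0 nat) set" where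
  "psi_fibre m a \<alpha> = {\<gamma> \<in> ymons m. psi_exp a \<gamma> = psi_exp a \<alpha>}"

lemma tdeg_eq_if_mem_psi_fibre: "\<gamma> \<in> psi_fibre m a \<alpha> \<Longrightarrow> tdeg \<gamma> = tdeg \<alpha>"
  unfolding psi_fibre_def psi_exp_def by simp

lemma finite_ymons_tdeg: "finite {\<gamma> \<in> ymons m. tdeg \<gamma> = d}"
proof (rule finite_imageD)
  let ?f = "\<lambda>\<gamma>. restrict (Poly_Mapping.lookup \<gamma>) {..m}"
  show "finite (?f ` {\<gamma> \<in> ymons m. tdeg \<gamma> = d})"
  proof (rule finite_subset)
    show "?f ` {\<gamma> \<in> ymons m. tdeg \<gamma> = d} \<subseteq> PiE {..m} (\<lambda>_. {..d})"
      by (intro image_subsetI) (auto simp: restrict_PiE_iff lookup_le_tdeg)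
  qed (simp add: finite_PiE)
  show "inj_on ?f {\<gamma> \<in> ymons m. tdeg \<gamma> = d}"
  proof (rule inj_onI)
    fix \<gamma> \<delta> assume "\<gamma> \<in> {\<gamma> \<in> ymons m. tdeg \<gamma> = d}" "\<delta> \<in> {\<gamma> \<in> ymons m. tdeg \<gamma> = d}"
      and eq: "?f \<gamma> = ?f \<delta>"
    then have keys: "Poly_Mapping.keys \<gamma> \<subseteq> {..m}" "Poly_Mapping.keys \<delta> \<subseteq> {..m}"
      unfolding ymons_def by auto
    have "Poly_Mapping.lookup \<gamma> i = Poly_Mapping.lookup \<delta> i" for i
    proof (cases "i \<le> m")
      case True
      then show ?thesis using fun_cong[OF eq, of i] by simp
    next
      case False
      then show ?thesis using keys by (metis atMost_iff in_keys_iff subsetD)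
    qed
    then show "\<gamma> = \<delta>" by (rule poly_mapping_eqI)
  qed
qed

lemma finite_psi_fibre: "finite (psi_fibre m a \<alpha>)"
proof (rule finite_subset)
  show "psi_fibre m a \<alpha> \<subseteq> {\<gamma> \<in> ymons m. tdeg \<gamma> = tdeg \<alpha>}"
    using tdeg_eq_if_mem_psi_fibre by (auto simp: psi_fibre_def)
qed (rule finite_ymons_tdeg)

lemma psi_fibre_attains_deltaA:
  assumes "a ` {..m} = latpts M" and "a 0 = 0" and "\<alpha> \<in> ymons m"
  obtains \<gamma> where "\<gamma> \<in> psi_fibre m a \<alpha>"
    and "Poly_Mapping.lookup \<gamma> 0 + deltaA M (fst (psi_exp a \<alpha>)) = tdeg \<alpha>"
proof -
  define s where "s = fst (psi_exp a \<alpha>)"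
  define \<delta> where "\<delta> = deltaA M s"
  have pa: "psi_exp a \<alpha> = (s, int (tdeg \<alpha>))"
    unfolding s_def psi_exp_def by simp
  moreover have "psi_exp a \<alpha> \<in> S_Mh M"
    unfolding psi_exp_image_ymons[OF assms(1), symmetric] using assms(3) by (rule imageI)
  ultimately have "(s, int (tdeg \<alpha>)) \<in> S_Mh M" by simp
  then have le: "\<delta> \<le> tdeg \<alpha>" and "(s, int \<delta>) \<in> S_Mh M"
    unfolding \<delta>_def by (simp_all add: deltaA_le deltaA_mem_S_Mh)
  then obtain \<gamma>\<^sub>0 where \<gamma>\<^sub>0: "\<gamma>\<^sub>0 \<in> ymons m" "psi_exp a \<gamma>\<^sub>0 = (s, int \<delta>)"
    using psi_exp_image_ymons[OF assms(1)] by (metis imageE)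
  define \<gamma> where "\<gamma> = \<gamma>\<^sub>0 + Poly_Mapping.single 0 (tdeg \<alpha> - \<delta>)"
  have "psi_exp a \<gamma> = (s, int \<delta>) + (0, int (tdeg \<alpha> - \<delta>))"
    unfolding \<gamma>_def psi_exp_add psi_exp_single using \<gamma>\<^sub>0(2) assms(2) by simp
  also have "\<dots> = psi_exp a \<alpha>"
    using le pa by simp
  finally have "psi_exp a \<gamma> = psi_exp a \<alpha>" .
  moreover have \<gamma>_ymons: "\<gamma> \<in> ymons m"
    unfolding \<gamma>_def using \<gamma>\<^sub>0(1) by (simp add: ymons_add ymons_single)
  ultimately have fibre: "\<gamma> \<in> psi_fibre m a \<alpha>" unfolding psi_fibre_def by simp
  have "tdeg \<alpha> - \<delta> \<le> Poly_Mapping.lookup \<gamma> 0"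
    unfolding \<gamma>_def by (simp add: lookup_add)
  moreover have "Poly_Mapping.lookup \<gamma> 0 + \<delta> \<le> tdeg \<alpha>"
    using lookup0_add_deltaA_le_tdeg[OF assms(1,2) \<gamma>_ymons] fibre
    unfolding \<delta>_def s_def psi_fibre_def by (simp add: tdeg_eq_if_mem_psi_fibre[OF fibre])
  ultimately show ?thesis
    using that[OF fibre] le unfolding \<delta>_def s_def by linarith
qed

definition strict_total_on :: "'a set \<Rightarrow> ('a \<Rightarrow> 'a \<Rightarrow> bool) \<Rightarrow> bool" where
  "strict_total_on S R \<longleftrightarrow> irreflp_on S R \<and> transp_on S R \<and> totalp_on S R"

lemma monomial_order_on_imp_strict_total_on:
  assumes "monomial_order_on S lt"
  shows "strict_total_on S lt"
proof -
  have "irreflp_on S lt" "transp_on S lt" "totalp_on S lt"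
    using assms unfolding monomial_order_on_def irreflp_on_def transp_on_def totalp_on_def
    by (simp_all only: Ball_def) meson+
  then show ?thesis unfolding strict_total_on_def by simp
qed

lemma strict_total_on_conversep: "strict_total_on S R\<inverse>\<inverse> \<longleftrightarrow> strict_total_on S R"
  unfolding strict_total_on_def by simp

lemma strict_total_on_asym:
  assumes "strict_total_on S R" and "x \<in> S" and "y \<in> S" and "R x y"
  shows "\<not> R y x"
proof
  assume "R y x"
  then have "R x x" using assms transp_onD unfolding strict_total_on_def by metis
  then show False using assms irreflp_onD unfolding strict_total_on_def by metis
qed

lemma strict_total_on_ex1_greatest:
  assumes "strict_total_on S R" and "finite F" and "F \<noteq> {}" and "F \<subseteq> S"
  shows "\<exists>!b. b \<in> F \<and> (\<forall>g\<in>F. g = b \<or> R g b)"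
proof (rule ex_ex1I)
  show "\<exists>b. b \<in> F \<and> (\<forall>g\<in>F. g = b \<or> R g b)"
    using assms(2-4)
  proof (induction F rule: finite_ne_induct)
    case (insert x F)
    then obtain b where b: "b \<in> F" "\<forall>g\<in>F. g = b \<or> R g b" and S: "x \<in> S" "b \<in> S" "F \<subseteq> S"
      by auto
    show ?case
    proof (cases "R x b")
      case True
      then show ?thesis using b by auto
    next
      case False
      have "x \<noteq> b" using b(1) insert.hyps by auto
      then have "R b x"
        using False assms(1) S totalp_onD unfolding strict_total_on_def by metis
      moreover have "R g x" if "g \<in> F" "g \<noteq> b" for g
        using that b(2) S \<open>R b x\<close> assms(1) transp_onD unfolding strict_total_on_def by (metis subsetD)
      ultimately show ?thesis by auto
    qed
  qed simp
next
  fix b c assume "b \<in> F \<and> (\<forall>g\<in>F. g = b \<or> R g b)" "c \<in> F \<and> (\<forall>g\<in>F. g = c \<or> R g c)"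
  then show "b = c" using strict_total_on_asym[OF assms(1)] assms(4) by (metis subsetD)
qed

lemma lead_mon_greatest:
  assumes "strict_total_on S lt" and "Poly_Mapping.keys f \<subseteq> S" and "f \<noteq> 0"
  shows "lead_mon lt f \<in> Poly_Mapping.keys f"
    and "\<And>\<gamma>. \<gamma> \<in> Poly_Mapping.keys f \<Longrightarrow> \<gamma> \<noteq> lead_mon lt f \<Longrightarrow> lt \<gamma> (lead_mon lt f)"
proof -
  have "\<exists>!b. b \<in> Poly_Mapping.keys f \<and> (\<forall>g\<in>Poly_Mapping.keys f. g = b \<or> lt g b)"
    using assms by (intro strict_total_on_ex1_greatest) auto
  from theI'[OF this] show "lead_mon lt f \<in> Poly_Mapping.keys f"
    and "\<And>\<gamma>. \<gamma> \<in> Poly_Mapping.keys f \<Longrightarrow> \<gamma> \<noteq> lead_mon lt f \<Longrightarrow> lt \<gamma> (lead_mon lt f)"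
    unfolding lead_mon_def by auto
qed

lemma strict_total_on_ordy:
  assumes chipsi: "chipsi a ` ymons m \<subseteq> S"
    and "strict_total_on S ltM" and "strict_total_on (ymons m) ltt"
  shows "strict_total_on (ymons m) (ordy ltM ltt a)"
proof -
  have M: "irreflp_on S ltM" "transp_on S ltM" "totalp_on S ltM"
    and t: "irreflp_on (ymons m) ltt" "transp_on (ymons m) ltt" "totalp_on (ymons m) ltt"
    using assms(2,3) unfolding strict_total_on_def by auto
  have c: "chipsi a x \<in> S" if "x \<in> ymons m" for x
    using chipsi that by blast
  show ?thesis
    unfolding strict_total_on_def
  proof (intro conjI irreflp_onI transp_onI totalp_onI)
    fix x assume "x \<in> ymons m"
    then show "\<not> ordy ltM ltt a x x"
      using irreflp_onD[OF M(1) c] irreflp_onD[OF t(1)] unfolding ordy_def by simp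
  next
    fix x y z assume "x \<in> ymons m" "y \<in> ymons m" "z \<in> ymons m"
      and "ordy ltM ltt a x y" "ordy ltM ltt a y z"
    then show "ordy ltM ltt a x z"
      using transp_onD[OF M(2) c c c, of x y z] transp_onD[OF t(2), of x y z]
      unfolding ordy_def by (elim disjE conjE) simp_all
  next
    fix x y assume "x \<in> ymons m" "y \<in> ymons m" "x \<noteq> y"
    then show "ordy ltM ltt a x y \<or> ordy ltM ltt a y x"
      using totalp_onD[OF M(3) c c, of x y] totalp_onD[OF t(3), of x y]
      unfolding ordy_def by (cases "chipsi a x = chipsi a y") auto
  qed
qed

lemma psi_eq_sum:
  assumes "finite K" and "Poly_Mapping.keys f \<subseteq> K"
  shows "psi a f u = (\<Sum>\<gamma>\<in>K. if psi_exp a \<gamma> = u then Poly_Mapping.lookup f \<gamma> else 0)"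
proof -
  have "psi a f u = (\<Sum>\<gamma>\<in>Poly_Mapping.keys f. if psi_exp a \<gamma> = u then Poly_Mapping.lookup f \<gamma> else 0)"
    unfolding psi_def by (rule sum.inter_filter) simp
  also have "\<dots> = (\<Sum>\<gamma>\<in>K. if psi_exp a \<gamma> = u then Poly_Mapping.lookup f \<gamma> else 0)"
    using assms by (intro sum.mono_neutral_left) (auto simp: in_keys_iff)
  finally show ?thesis .
qed

lemma psi_diff: "psi a (f - g) u = psi a f u - psi a g u"
proof -
  let ?K = "Poly_Mapping.keys f \<union> Poly_Mapping.keys g"
  have "psi a (f - g) u = (\<Sum>\<gamma>\<in>?K. if psi_exp a \<gamma> = u then Poly_Mapping.lookup (f - g) \<gamma> else 0)"
    using keys_diff[of f g] by (intro psi_eq_sum) auto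
  also have "\<dots> = (\<Sum>\<gamma>\<in>?K. (if psi_exp a \<gamma> = u then Poly_Mapping.lookup f \<gamma> else 0)
                          - (if psi_exp a \<gamma> = u then Poly_Mapping.lookup g \<gamma> else 0))"
    by (intro sum.cong) (auto simp: lookup_minus)
  also have "\<dots> = psi a f u - psi a g u"
    by (simp add: sum_subtractf psi_eq_sum[of ?K])
  finally show ?thesis .
qed

lemma psi_single: "psi a (Poly_Mapping.single \<alpha> c) u = (if psi_exp a \<alpha> = u then c else 0)"
proof (cases "c = 0")
  case False
  then have "{\<gamma> \<in> Poly_Mapping.keys (Poly_Mapping.single \<alpha> c). psi_exp a \<gamma> = u}
             = (if psi_exp a \<alpha> = u then {\<alpha>} else {})"
    by auto
  then show ?thesis unfolding psi_def by simp
qed (simp add: psi_def)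

lemma keys_subset_ymons_if_mem_Tker: "f \<in> Tker m a \<Longrightarrow> Poly_Mapping.keys f \<subseteq> ymons m"
  unfolding Tker_def Ry_def by simp

lemma Tker_diff:
  assumes "f \<in> Tker m a" and "g \<in> Tker m a"
  shows "f - g \<in> Tker m a"
  using assms keys_diff[of f g] unfolding Tker_def Ry_def by (auto simp: psi_diff fun_eq_iff)

lemma single_diff_single_mem_Tker:
  assumes "\<alpha> \<in> ymons m" and "\<beta> \<in> ymons m" and "psi_exp a \<alpha> = psi_exp a \<beta>"
  shows "Poly_Mapping.single \<alpha> 1 - Poly_Mapping.single \<beta> 1 \<in> Tker m a"
proof -
  have "Poly_Mapping.keys (Poly_Mapping.single \<alpha> (1::'k::field) - Poly_Mapping.single \<beta> 1) \<subseteq> ymons m"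
    using assms(1,2) keys_diff[of "Poly_Mapping.single \<alpha> (1::'k)" "Poly_Mapping.single \<beta> 1"] by auto
  then show ?thesis
    using assms(3) unfolding Tker_def Ry_def by (simp add: psi_diff psi_single fun_eq_iff)
qed

lemma Tker_key_has_partner:
  assumes "f \<in> Tker m a" and "\<beta> \<in> Poly_Mapping.keys f"
  shows "\<exists>\<gamma>\<in>Poly_Mapping.keys f. \<gamma> \<noteq> \<beta> \<and> psi_exp a \<gamma> = psi_exp a \<beta>"
proof (rule ccontr)
  assume "\<not> ?thesis"
  then have "{\<gamma> \<in> Poly_Mapping.keys f. psi_exp a \<gamma> = psi_exp a \<beta>} = {\<beta>}"
    using assms(2) by auto
  then have "psi a f (psi_exp a \<beta>) = Poly_Mapping.lookup f \<beta>"
    unfolding psi_def by simp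
  moreover have "psi a f (psi_exp a \<beta>) = 0"
    using assms(1) unfolding Tker_def by simp
  ultimately show False
    using assms(2) by (simp add: in_keys_iff)
qed

lemma lead_mon_ne_psi_fibre_least:
  assumes "strict_total_on (ymons m) lt"
    and "\<beta> \<in> psi_fibre m a \<alpha>" and least: "\<forall>\<gamma>\<in>psi_fibre m a \<alpha>. \<gamma> = \<beta> \<or> lt \<beta> \<gamma>"
    and "f \<in> Tker m a" and "f \<noteq> 0"
  shows "lead_mon lt f \<noteq> \<beta>"
proof
  assume lead: "lead_mon lt f = \<beta>"
  have keys: "Poly_Mapping.keys f \<subseteq> ymons m"
    using assms(4) by (rule keys_subset_ymons_if_mem_Tker)
  note greatest = lead_mon_greatest[OF assms(1) keys assms(5), unfolded lead]
  obtain \<gamma> where \<gamma>: "\<gamma> \<in> Poly_Mapping.keys f" "\<gamma> \<noteq> \<beta>" "psi_exp a \<gamma> = psi_exp a \<beta>"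
    using Tker_key_has_partner[OF assms(4) greatest(1)] by blast
  have "\<gamma> \<in> psi_fibre m a \<alpha>"
    using \<gamma> keys assms(2) unfolding psi_fibre_def by auto
  then have "lt \<beta> \<gamma>" using least \<gamma>(2) by blast
  moreover have "lt \<gamma> \<beta>" using greatest(2)[OF \<gamma>(1,2)] .
  ultimately show False
    using strict_total_on_asym[OF assms(1)] \<gamma>(1) keys greatest(1) by blast
qed

lemma normal_form_single_eq_psi_fibre_least:
  assumes ord: "strict_total_on (ymons m) lt" and "\<alpha> \<in> ymons m"
    and \<beta>: "\<beta> \<in> psi_fibre m a \<alpha>" and least: "\<forall>\<gamma>\<in>psi_fibre m a \<alpha>. \<gamma> = \<beta> \<or> lt \<beta> \<gamma>"
  shows "normal_form (Ry m) (Tker m a) lt (Poly_Mapping.single \<alpha> 1) = (Poly_Mapping.single \<beta> (1::'k::field))"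
proof -
  let ?T = "Tker m a :: ((nat \<Rightarrow>\<^sub>0 nat) \<Rightarrow>\<^sub>0 'k) set"
  let ?leads = "{lead_mon lt f | f. f \<in> ?T \<and> f \<noteq> 0}"
  let ?r = "Poly_Mapping.single \<beta> (1::'k)"
  have \<beta>_ymons: "\<beta> \<in> ymons m" and "psi_exp a \<alpha> = psi_exp a \<beta>"
    using \<beta> unfolding psi_fibre_def by auto
  then have diff: "Poly_Mapping.single \<alpha> 1 - ?r \<in> ?T"
    using single_diff_single_mem_Tker assms(2) by blast
  have \<beta>_not_lead: "\<beta> \<notin> ?leads"
    using lead_mon_ne_psi_fibre_least[OF ord \<beta> least] by blast
  show ?thesis
    unfolding normal_form_def
  proof (rule the_equality)
    show "?r \<in> Ry m \<and> Poly_Mapping.single \<alpha> 1 - ?r \<in> ?T \<and> (\<forall>\<mu>\<in>Poly_Mapping.keys ?r. \<mu> \<notin> ?leads)"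
      using \<beta>_ymons diff \<beta>_not_lead unfolding Ry_def by simp
  next
    fix r assume r: "r \<in> Ry m \<and> Poly_Mapping.single \<alpha> 1 - r \<in> ?T \<and> (\<forall>\<mu>\<in>Poly_Mapping.keys r. \<mu> \<notin> ?leads)"
    note r_T = r[THEN conjunct2, THEN conjunct1] and r_keys = r[THEN conjunct2, THEN conjunct2]
    have "(Poly_Mapping.single \<alpha> 1 - ?r) - (Poly_Mapping.single \<alpha> 1 - r) \<in> ?T"
      using diff r_T by (rule Tker_diff)
    moreover have "(Poly_Mapping.single \<alpha> 1 - ?r) - (Poly_Mapping.single \<alpha> 1 - r) = r - ?r"
      by simp
    ultimately have r_diff: "r - ?r \<in> ?T" by simp
    show "r = ?r"
    proof (rule ccontr)
      assume "r \<noteq> ?r"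
      then have nz: "r - ?r \<noteq> 0" by simp
      then have lead: "lead_mon lt (r - ?r) \<in> ?leads"
        using r_diff by auto
      have "lead_mon lt (r - ?r) \<in> Poly_Mapping.keys (r - ?r)"
        using lead_mon_greatest(1)[OF ord keys_subset_ymons_if_mem_Tker[OF r_diff] nz] .
      then have "lead_mon lt (r - ?r) \<in> Poly_Mapping.keys r \<or> lead_mon lt (r - ?r) = \<beta>"
        using keys_diff[of r ?r] by auto
      then show False
        using r_keys lead \<beta>_not_lead by auto
    qed
  qed
qed

lemma deg_y0_single: "c \<noteq> 0 \<Longrightarrow> deg_y0 (Poly_Mapping.single \<beta> c) = Poly_Mapping.lookup \<beta> 0"
  unfolding deg_y0_def by simp

lemma psi_fibre_has_least:
  assumes "strict_total_on (ymons m) lt" and "\<alpha> \<in> ymons m"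
  obtains \<beta> where "\<beta> \<in> psi_fibre m a \<alpha>" and "\<forall>\<gamma>\<in>psi_fibre m a \<alpha>. \<gamma> = \<beta> \<or> lt \<beta> \<gamma>"
proof -
  have "\<alpha> \<in> psi_fibre m a \<alpha>" and sub: "psi_fibre m a \<alpha> \<subseteq> ymons m"
    using assms(2) unfolding psi_fibre_def by auto
  then have "psi_fibre m a \<alpha> \<noteq> {}" by blast
  with strict_total_on_ex1_greatest[OF strict_total_on_conversep[THEN iffD2, OF assms(1)] finite_psi_fibre _ sub]
  show ?thesis using that by auto
qed

lemma ordy_least_maximizes_lookup0:
  assumes "strict_total_on (ymons m) (ordy ltM ltt a)"
    and "\<beta> \<in> psi_fibre m a \<alpha>" and "\<forall>\<gamma>\<in>psi_fibre m a \<alpha>. \<gamma> = \<beta> \<or> ordy ltM ltt a \<beta> \<gamma>"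
    and "\<gamma> \<in> psi_fibre m a \<alpha>"
  shows "Poly_Mapping.lookup \<gamma> 0 \<le> Poly_Mapping.lookup \<beta> 0"
proof -
  have "\<gamma> \<in> ymons m" "\<beta> \<in> ymons m" and "\<gamma> = \<beta> \<or> ordy ltM ltt a \<beta> \<gamma>"
    using assms(2-4) unfolding psi_fibre_def by auto
  then have "\<not> ordy ltM ltt a \<gamma> \<beta>"
    using strict_total_on_asym[OF assms(1)] by metis
  then show ?thesis
    using tdeg_eq_if_mem_psi_fibre[OF assms(2)] tdeg_eq_if_mem_psi_fibre[OF assms(4)]
    unfolding ordy_def by auto
qed

theorem mainTheorem3:
  fixes M :: "(real ^ 'n) set"
    and m :: nat
    and a :: "nat \<Rightarrow> int ^ 'n"
    and ltM :: "int ^ 'n \<Rightarrow> int ^ 'n \<Rightarrow> bool"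
    and ltt :: "(nat \<Rightarrow>\<^sub>0 nat) \<Rightarrow> (nat \<Rightarrow>\<^sub>0 nat) \<Rightarrow> bool"
    and \<alpha> :: "nat \<Rightarrow>\<^sub>0 nat"
  assumes "polytope M"
    and "0 \<in> M"
    and "pointed (S_M M)"
    and "pointed (S_Mh M)"
    and "bij_betw a {..m} (latpts M)"
    and "a 0 = 0"
    and "monomial_order_on (S_M M) ltM"
    and "monomial_order_on (ymons m) ltt"
    and "\<alpha> \<in> ymons m"
  shows "int (deg_y0 (normal_form (Ry m) (Tker m a :: ((nat \<Rightarrow>\<^sub>0 nat) \<Rightarrow>\<^sub>0 'k::field_char_0) set)
                (ordy ltM ltt a) (Poly_Mapping.single \<alpha> 1)))
         = int (tdeg \<alpha>) - int (deltaA M (fst (psi_exp a \<alpha>)))"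
proof -
  let ?lt = "ordy ltM ltt a" and ?\<delta> = "deltaA M (fst (psi_exp a \<alpha>))"
  have a_image: "a ` {..m} = latpts M"
    using assms(5) by (rule bij_betw_imp_surj_on)
  have ord: "strict_total_on (ymons m) ?lt"
    using chipsi_image_ymons_subset_S_M[OF a_image]
      monomial_order_on_imp_strict_total_on[OF assms(7)]
      monomial_order_on_imp_strict_total_on[OF assms(8)]
    by (rule strict_total_on_ordy)
  obtain \<beta> where \<beta>: "\<beta> \<in> psi_fibre m a \<alpha>" and least: "\<forall>\<gamma>\<in>psi_fibre m a \<alpha>. \<gamma> = \<beta> \<or> ?lt \<beta> \<gamma>"
    using psi_fibre_has_least[OF ord assms(9)] .
  obtain \<gamma> where \<gamma>: "\<gamma> \<in> psi_fibre m a \<alpha>" and \<gamma>_attains: "Poly_Mapping.lookup \<gamma> 0 + ?\<delta> = tdeg \<alpha>"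
    using psi_fibre_attains_deltaA[OF a_image assms(6,9)] .
  have "Poly_Mapping.lookup \<gamma> 0 \<le> Poly_Mapping.lookup \<beta> 0"
    using ord \<beta> least \<gamma> by (rule ordy_least_maximizes_lookup0)
  moreover have "Poly_Mapping.lookup \<beta> 0 + ?\<delta> \<le> tdeg \<alpha>"
    using lookup0_add_deltaA_le_tdeg[OF a_image assms(6), of \<beta>] \<beta> tdeg_eq_if_mem_psi_fibre[OF \<beta>]
    unfolding psi_fibre_def by simp
  ultimately have "Poly_Mapping.lookup \<beta> 0 + ?\<delta> = tdeg \<alpha>"
    using \<gamma>_attains by linarith
  moreover have "normal_form (Ry m) (Tker m a) ?lt (Poly_Mapping.single \<alpha> 1) = Poly_Mapping.single \<beta> (1::'k)"
    using ord assms(9) \<beta> least by (rule normal_form_single_eq_psi_fibre_least)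
  ultimately show ?thesis
    by (simp add: deg_y0_single)
qed

end
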